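(* Suppose the flow space $\mathbb X$ admits an expansion $(X_i,f_i,p_i)$ about some point $x_\bullet$. If there is $n\in\mathbb Z^+$ such that for every $m>n$ the composite positive map $f_{n,m}=f_n\circ\cdots\circ f_{m-1}\colon X_m\to X_n$ is degenerate proper, then $\mathbb X$ contains a periodic orbit (an orbit homeomorphic to a circle).
   Context: A flow space is a compact metrizable space $\mathbb X$ of topological dimension one with a continuous $\mathbb R$-action $(t,x)\mapsto t.x$ without fixed points. Oriented wedge of circles: one-point union of finitely many circles, each with a chosen orientation. A positive map between oriented wedges of circles is a continuous surjection sending wedge point to wedge point, preserving the orientation of each circle and locally injective away from the wedge point. A projection $p\colon\mathbb X\to W$ onto an oriented wedge is a continuous surjection, locally injective and orientation preserving along orbits. An expansion of $\mathbb X$ about $x_\bullet$: oriented wedges $X_i$ with wedge points $x_i$, positive maps $f_i\colon X_{i+1}\to X_i$, projections $p_i\colon\mathbb X\to X_i$ with $p_i(x_\bullet)=x_i$, $p_n=f_{n,m}\circ p_m$ for $m>n$, and $x\mapsto (p_i(x))_i$ a homeomorphism of $\mathbb X$ onto $\varprojlim(X_i,f_i)$. Symbolic representation: label the circles of the target wedge by letters of an alphabet $\mathcal A$ and those of the source by letters of $\mathcal B$; for a positive map $f$ and $b\in\mathcal B$, $f_s(b)\in\mathcal A^*$ is the word listing in order the circles traversed by the image of circle $b$ traversed once positively from the wedge point. A positive map is degenerate proper if there is a letter $a$ such that every $f_s(b)$ begins and ends with $a$, and $f_s(b)=a$ for at least one $b$. *)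

theory Defs
  imports "HOL-Analysis.Analysis"
begin

definition cover_dim_le :: "'a::topological_space set \<Rightarrow> nat \<Rightarrow> bool" where
  "cover_dim_le X n \<longleftrightarrow>
     (\<forall>\<U>. finite \<U> \<and> (\<forall>U\<in>\<U>. openin (top_of_set X) U) \<and> X \<subseteq> \<Union>\<U> \<longrightarrow>
        (\<exists>\<V>. finite \<V> \<and> (\<forall>V\<in>\<V>. openin (top_of_set X) V) \<and> X \<subseteq> \<Union>\<V> \<and>
             (\<forall>V\<in>\<V>. \<exists>U\<in>\<U>. V \<subseteq> U) \<and>
             (\<forall>x\<in>X. card {V\<in>\<V>. x \<in> V} \<le> n + 1)))"

definition topological_dim_one :: "'a::topological_space set \<Rightarrow> bool" where
  "topological_dim_one X \<longleftrightarrow> cover_dim_le X 1 \<and> \<not> cover_dim_le X 0"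

text \<open>A flow space: compact subset X of a metric space (hence compact metrizable),
of topological dimension one, with a continuous R-action phi without fixed points.\<close>
definition flow_space :: "'a::metric_space set \<Rightarrow> (real \<Rightarrow> 'a \<Rightarrow> 'a) \<Rightarrow> bool" where
  "flow_space X \<phi> \<longleftrightarrow>
     compact X \<and> topological_dim_one X \<and>
     continuous_on (UNIV \<times> X) (\<lambda>(t, x). \<phi> t x) \<and>
     (\<forall>t. \<forall>x\<in>X. \<phi> t x \<in> X) \<and>
     (\<forall>x\<in>X. \<phi> 0 x = x) \<and>
     (\<forall>s t. \<forall>x\<in>X. \<phi> (s + t) x = \<phi> s (\<phi> t x)) \<and>
     (\<forall>x\<in>X. \<exists>t. \<phi> t x \<noteq> x)"

definition orbit :: "(real \<Rightarrow> 'a \<Rightarrow> 'a) \<Rightarrow> 'a \<Rightarrow> 'a set" where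
  "orbit \<phi> x = range (\<lambda>t. \<phi> t x)"

text \<open>Circle number a (a \<ge> 1) is the circle of radius a centred at a in the complex plane,
parametrised (with period 1, positively) so that parameter 0 is the wedge point 0.
Distinct such circles meet exactly in 0, so for a finite nonempty set A of positive
naturals, the union is an oriented wedge of card A circles with wedge point 0.
Every oriented wedge of finitely many circles is orientation-preservingly
homeomorphic to such a model.\<close>
definition wcirc :: "nat \<Rightarrow> real \<Rightarrow> complex" where
  "wcirc a \<theta> = of_nat a * (1 - cis (2 * pi * \<theta>))"

definition circle_of :: "nat \<Rightarrow> complex set" where
  "circle_of a = range (wcirc a)"

definition wedge :: "nat set \<Rightarrow> complex set" where
  "wedge A = (\<Union>a\<in>A. circle_of a)"

definition wedge_labels :: "nat set \<Rightarrow> bool" where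
  "wedge_labels A \<longleftrightarrow> finite A \<and> A \<noteq> {} \<and> 0 \<notin> A"

text \<open>A path g : R \<rightarrow> wedge A is locally injective and orientation preserving:
near every time t0 it is injective, and on each side of t0 it runs inside a single
circle along a continuous strictly increasing parameter.\<close>
definition locally_positive :: "nat set \<Rightarrow> (real \<Rightarrow> complex) \<Rightarrow> bool" where
  "locally_positive A g \<longleftrightarrow>
     (\<forall>t0. \<exists>e>0. inj_on g {t0 - e<..<t0 + e} \<and>
        (\<exists>a\<in>A. \<exists>\<theta>. continuous_on {t0 - e..t0} \<theta> \<and> strict_mono_on {t0 - e..t0} \<theta> \<and>
                 (\<forall>t\<in>{t0 - e..t0}. g t = wcirc a (\<theta> t))) \<and>
        (\<exists>b\<in>A. \<exists>\<theta>. continuous_on {t0..t0 + e} \<theta> \<and> strict_mono_on {t0..t0 + e} \<theta> \<and>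
                 (\<forall>t\<in>{t0..t0 + e}. g t = wcirc b (\<theta> t))))"

definition positive_map :: "nat set \<Rightarrow> nat set \<Rightarrow> (complex \<Rightarrow> complex) \<Rightarrow> bool" where
  "positive_map A B f \<longleftrightarrow>
     continuous_on (wedge B) f \<and> f ` wedge B = wedge A \<and> f 0 = 0 \<and>
     (\<forall>b\<in>B. locally_positive A (\<lambda>\<theta>. f (wcirc b \<theta>)))"

text \<open>Symbolic representation: sym_word f b w says that w is the word f_s(b), i.e. the
list of circles of the target traversed by the image of circle b traversed once
positively from the wedge point.\<close>
definition sym_word :: "(complex \<Rightarrow> complex) \<Rightarrow> nat \<Rightarrow> nat list \<Rightarrow> bool" where
  "sym_word f b w \<longleftrightarrow>
     (\<exists>s::nat \<Rightarrow> real. s 0 = 0 \<and> s (length w) = 1 \<and>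
        (\<forall>j<length w. s j < s (Suc j)) \<and>
        (\<forall>j\<le>length w. f (wcirc b (s j)) = 0) \<and>
        (\<forall>j<length w. \<forall>\<theta>\<in>{s j<..<s (Suc j)}. f (wcirc b \<theta>) \<in> circle_of (w ! j) - {0}))"

definition degenerate_proper :: "nat set \<Rightarrow> nat set \<Rightarrow> (complex \<Rightarrow> complex) \<Rightarrow> bool" where
  "degenerate_proper A B f \<longleftrightarrow>
     (\<exists>a\<in>A. (\<forall>b\<in>B. \<exists>w. sym_word f b w \<and> w \<noteq> [] \<and> hd w = a \<and> last w = a) \<and>
            (\<exists>b\<in>B. sym_word f b [a]))"

text \<open>fcomp f n k = f_{n,n+k} = f n \<circ> ... \<circ> f (n+k-1).\<close>
fun fcomp :: "(nat \<Rightarrow> 'b \<Rightarrow> 'b) \<Rightarrow> nat \<Rightarrow> nat \<Rightarrow> 'b \<Rightarrow> 'b" where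
  "fcomp f n 0 = id"
| "fcomp f n (Suc k) = fcomp f n k \<circ> f (n + k)"

definition projection :: "'a::topological_space set \<Rightarrow> (real \<Rightarrow> 'a \<Rightarrow> 'a) \<Rightarrow> nat set \<Rightarrow> ('a \<Rightarrow> complex) \<Rightarrow> bool" where
  "projection X \<phi> A p \<longleftrightarrow>
     continuous_on X p \<and> p ` X = wedge A \<and>
     (\<forall>x\<in>X. locally_positive A (\<lambda>t. p (\<phi> t x)))"

definition inv_limit :: "(nat \<Rightarrow> nat set) \<Rightarrow> (nat \<Rightarrow> complex \<Rightarrow> complex) \<Rightarrow> (nat \<Rightarrow> complex) set" where
  "inv_limit A f = {y. \<forall>i. y i \<in> wedge (A i) \<and> f i (y (Suc i)) = y i}"

definition expansion ::
  "'a::metric_space set \<Rightarrow> (real \<Rightarrow> 'a \<Rightarrow> 'a) \<Rightarrow> 'a \<Rightarrow> (nat \<Rightarrow> nat set) \<Rightarrow>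
   (nat \<Rightarrow> complex \<Rightarrow> complex) \<Rightarrow> (nat \<Rightarrow> 'a \<Rightarrow> complex) \<Rightarrow> bool" where
  "expansion X \<phi> xb A f p \<longleftrightarrow>
     xb \<in> X \<and>
     (\<forall>i. wedge_labels (A i)) \<and>
     (\<forall>i. positive_map (A i) (A (Suc i)) (f i)) \<and>
     (\<forall>i. projection X \<phi> (A i) (p i)) \<and>
     (\<forall>i. p i xb = 0) \<and>
     (\<forall>n m. m > n \<longrightarrow> (\<forall>x\<in>X. p n x = fcomp f n (m - n) (p m x))) \<and>
     (\<exists>g. homeomorphism X (inv_limit A f) (\<lambda>x i. p i x) g)"

end

theory Submission
  imports Defs
begin

text \<open>
  As \<open>f\<^sub>n\<^sub>,\<^sub>m\<close> is degenerate proper for all \<open>m > n\<close>, there is a circle \<open>a\<close> of \<open>X\<^sub>n\<close> such that for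
  infinitely many \<open>m\<close> the image of some circle \<open>c\<close> of \<open>X\<^sub>m\<close> runs once around \<open>a\<close>. The orbit of a
  point projecting to the middle of \<open>c\<close> leaves the wedge point of \<open>X\<^sub>m\<close> and returns to it; on this
  arc its projection to \<open>X\<^sub>n\<close> runs around \<open>a\<close> and so passes the middle of \<open>a\<close>. This yields points
  \<open>V\<^sub>m\<close> projecting to the middle of \<open>a\<close>, on orbit arcs \<open>[-s\<^sub>m, t\<^sub>m]\<close> that stay on \<open>a\<close> in \<open>X\<^sub>n\<close> and
  whose ends project to the wedge point of \<open>X\<^sub>m\<close>, hence of every \<open>X\<^sub>k\<close> with \<open>k \<le> m\<close>.

  By compactness the \<open>V\<^sub>m\<close> accumulate at a point \<open>v\<close>. The times \<open>s\<^sub>m, t\<^sub>m\<close> stay bounded: past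
  the middle of \<open>a\<close> the norm of the projection decreases along the arc, while the projected orbit
  of \<open>v\<close> reaches the wedge point and leaves it again, which the orbits of nearby \<open>V\<^sub>m\<close> have to
  follow. For a subsequence \<open>s\<^sub>m \<longrightarrow> \<sigma>\<close> and \<open>t\<^sub>m \<longrightarrow> \<tau>\<close>; the limits of the ends of the arcs project to
  the wedge point at every level, so \<open>\<phi> \<tau> v = x\<^sub>\<bullet> = \<phi> (-\<sigma>) v\<close> by injectivity of the expansion.
  Hence \<open>x\<^sub>\<bullet>\<close> is periodic with period \<open>\<sigma> + \<tau> > 0\<close>, and the orbit of a periodic point that is
  not fixed is a circle.
\<close>

section \<open>Circles of the model wedge\<close>

lemma norm_wcirc: "norm (wcirc a x) = 2 * real a * \<bar>sin (pi * x)\<bar>"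
proof -
  have "norm (1 - cis (2*pi*x)) ^ 2 = (1 - cos (2*pi*x))^2 + (sin (2*pi*x))^2"
    by (simp add: cmod_power2)
  also have "\<dots> = 2 - 2 * cos (2*pi*x)"
    using sin_cos_squared_add[of "2*pi*x"] by (simp add: power2_eq_square algebra_simps)
  also have "\<dots> = (2 * \<bar>sin (pi*x)\<bar>)^2"
    using cos_double_sin[of "pi*x"] by (simp add: power2_eq_square algebra_simps)
  finally have "norm (1 - cis (2*pi*x)) = 2 * \<bar>sin (pi*x)\<bar>"
    by (metis abs_ge_zero norm_ge_zero power2_eq_imp_eq mult_nonneg_nonneg zero_le_numeral)
  then show ?thesis by (simp add: wcirc_def norm_mult)
qed

lemma wcirc_eq_0_iff:
  assumes "a \<noteq> 0" shows "wcirc a x = 0 \<longleftrightarrow> x \<in> \<int>"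
proof -
  have "wcirc a x = 0 \<longleftrightarrow> sin (pi * x) = 0"
    using assms by (simp add: norm_wcirc flip: norm_eq_zero[of "wcirc a x"])
  also have "\<dots> \<longleftrightarrow> x \<in> \<int>"
    by (auto simp: sin_zero_iff_int2 Ints_def)
  finally show ?thesis .
qed

lemma wcirc_add_of_int: "wcirc a (x + of_int k) = wcirc a x"
proof -
  have "cis (2 * pi * (x + of_int k)) = cis (2 * pi * x) * cis (2 * pi * of_int k)"
    by (simp add: cis_mult algebra_simps)
  also have "cis (2 * pi * of_int k) = 1"
    by (rule cis_multiple_2pi) simp
  finally show ?thesis
    by (simp add: wcirc_def)
qed

lemma wcirc_half_neq_0:
  assumes "a \<noteq> 0" shows "wcirc a (1/2) \<noteq> 0"
proof
  assume "wcirc a (1/2) = 0"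
  then have "2 * real a * \<bar>sin (pi * (1/2))\<bar> = 0"
    using norm_wcirc[of a "1/2"] by simp
  with assms show False
    by simp
qed

lemma cnj_wcirc: "cnj (wcirc a x) = wcirc a (- x)"
  by (simp add: wcirc_def cis_cnj)

lemma continuous_on_wcirc [continuous_intros]:
  "continuous_on S g \<Longrightarrow> continuous_on S (\<lambda>t. wcirc a (g t))"
  unfolding wcirc_def by (intro continuous_intros)

lemma isCont_wcirc: "isCont (wcirc a) x"
  using continuous_on_wcirc[OF continuous_on_id, of UNIV a]
  by (simp add: continuous_on_eq_continuous_at)

lemma circle_of_eq_image: "circle_of a = wcirc a ` {0..1}"
proof
  show "circle_of a \<subseteq> wcirc a ` {0..1}"
  proof
    fix z assume "z \<in> circle_of a"
    then obtain x where "z = wcirc a x"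
      by (auto simp: circle_of_def)
    then have "z = wcirc a (frac x)"
      using wcirc_add_of_int[of a "frac x" "\<lfloor>x\<rfloor>"] by (simp add: frac_def)
    then show "z \<in> wcirc a ` {0..1}"
      using frac_lt_1[of x] frac_ge_0[of x] by force
  qed
qed (auto simp: circle_of_def)

lemma closed_circle_of: "closed (circle_of a)"
  unfolding circle_of_eq_image
  by (intro compact_imp_closed compact_continuous_image continuous_on_wcirc continuous_on_id) simp

lemma circle_of_0 [simp]: "circle_of 0 = {0}"
  by (auto simp: circle_of_def wcirc_def)

lemma cnj_in_circle_of: "z \<in> circle_of a \<Longrightarrow> cnj z \<in> circle_of a"
  by (auto simp: circle_of_def cnj_wcirc)

lemma cnj_in_wedge: "z \<in> wedge A \<Longrightarrow> cnj z \<in> wedge A"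
  unfolding wedge_def by (blast intro: cnj_in_circle_of)

lemma circle_of_equation:
  assumes "z \<in> circle_of a" shows "(Re z)^2 + (Im z)^2 = 2 * real a * Re z"
proof -
  obtain x where "z = wcirc a x"
    using assms by (auto simp: circle_of_def)
  then have re: "Re z = real a * (1 - cos (2*pi*x))" and im: "Im z = - (real a * sin (2*pi*x))"
    by (simp_all add: wcirc_def)
  have "(Re z)^2 + (Im z)^2 = (real a)^2 * ((1 - cos (2*pi*x))^2 + (sin (2*pi*x))^2)"
    unfolding re im by algebra
  also have "(1 - cos (2*pi*x))^2 + (sin (2*pi*x))^2 = 2 * (1 - cos (2*pi*x))"
    using sin_cos_squared_add[of "2*pi*x"] by (simp add: power2_eq_square algebra_simps)
  finally show ?thesis
    by (simp add: re power2_eq_square)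
qed

lemma circle_of_inter:
  assumes "z \<in> circle_of a" "z \<in> circle_of b" "a \<noteq> b" shows "z = 0"
proof -
  have "(real a - real b) * Re z = 0"
    using circle_of_equation[OF assms(1)] circle_of_equation[OF assms(2)] by (simp add: algebra_simps)
  then have "Re z = 0"
    using assms(3) by simp
  moreover have "Im z = 0"
    using circle_of_equation[OF assms(1)] \<open>Re z = 0\<close> by simp
  ultimately show ?thesis
    by (simp add: complex_eq_iff)
qed

lemma norm_wcirc_mono:
  assumes "0 \<le> x" "x \<le> y" "y \<le> 1/2" shows "norm (wcirc a x) \<le> norm (wcirc a y)"
proof -
  have "0 \<le> pi * x" "pi * x \<le> pi * y" "pi * y \<le> pi / 2"
    using assms mult_left_mono[of y "1/2" pi] by auto
  then have "sin (pi * x) \<le> sin (pi * y)"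
    using pi_gt_zero by (intro sin_monotone_2pi_le) linarith+
  moreover have "0 \<le> sin (pi * x)"
    using assms by (intro sin_ge_zero) auto
  ultimately show ?thesis
    by (simp add: norm_wcirc mult_left_mono)
qed

lemma norm_wcirc_antimono:
  assumes "1/2 \<le> x" "x \<le> y" "y \<le> 1" shows "norm (wcirc a y) \<le> norm (wcirc a x)"
proof -
  have reflect: "norm (wcirc a u) = norm (wcirc a (1 - u))" for u
    by (simp add: norm_wcirc right_diff_distrib sin_diff)
  show ?thesis
    unfolding reflect[of x] reflect[of y] by (rule norm_wcirc_mono) (use assms in auto)
qed

lemma circle_of_label_nonzero: "z \<in> circle_of a \<Longrightarrow> z \<noteq> 0 \<Longrightarrow> a \<noteq> 0"
  by (metis circle_of_0 singletonD)

text \<open>Since \<open>1 - wcirc a x / a = cis (2 \<pi> x)\<close>, this inverts \<open>wcirc a\<close> on \<open>[0, 1[\<close>.\<close>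

definition circle_angle :: "nat \<Rightarrow> complex \<Rightarrow> real" where
  "circle_angle a z = Arg2pi (1 - z / of_nat a) / (2*pi)"

lemma circle_angle_wcirc:
  assumes "a \<noteq> 0" "0 \<le> x" "x < 1" shows "circle_angle a (wcirc a x) = x"
proof -
  have "1 - wcirc a x / of_nat a = exp (\<i> * complex_of_real (2*pi*x))"
    using assms(1) by (simp add: wcirc_def cis_conv_exp)
  moreover have "Arg2pi (exp (\<i> * complex_of_real (2*pi*x))) = 2*pi*x"
    by (subst Arg2pi_exp) (use assms in auto)
  ultimately show ?thesis
    by (simp add: circle_angle_def)
qed

lemma circle_angle:
  assumes "z \<in> circle_of a" "z \<noteq> 0"
  shows "0 < circle_angle a z" "circle_angle a z < 1" "wcirc a (circle_angle a z) = z"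
proof -
  have a: "a \<noteq> 0"
    using assms by (rule circle_of_label_nonzero)
  obtain x where "z = wcirc a x"
    using assms by (auto simp: circle_of_def)
  then have z: "z = wcirc a (frac x)"
    using wcirc_add_of_int[of a "frac x" "\<lfloor>x\<rfloor>"] by (simp add: frac_def)
  moreover have "frac x \<noteq> 0"
    using z assms(2) by (auto simp: wcirc_def)
  ultimately show "0 < circle_angle a z" "circle_angle a z < 1" "wcirc a (circle_angle a z) = z"
    using circle_angle_wcirc[OF a] frac_lt_1[of x] frac_ge_0[of x] by (auto simp: order_less_le)
qed

lemma isCont_circle_angle:
  assumes "z \<in> circle_of a" "z \<noteq> 0" shows "isCont (circle_angle a) z"
proof -
  have a: "a \<noteq> 0"
    using assms by (rule circle_of_label_nonzero)
  have "Arg2pi (1 - z / of_nat a) \<noteq> 0"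
    using circle_angle(1)[OF assms] unfolding circle_angle_def by (metis div_0 less_irrefl)
  then have "1 - z / of_nat a \<notin> \<real>\<^sub>\<ge>\<^sub>0"
    using Arg2pi_eq_0 complex_nonneg_Reals_iff complex_is_Real_iff by (auto simp: Reals_def)
  then have "isCont Arg2pi (1 - z / of_nat a)"
    by (rule continuous_at_Arg2pi)
  moreover have "isCont (\<lambda>z::complex. 1 - z / of_nat a) z"
    using a by (intro continuous_intros) auto
  ultimately have "isCont (\<lambda>z. Arg2pi (1 - z / of_nat a)) z"
    using isCont_o2 by blast
  then show ?thesis
    unfolding circle_angle_def[abs_def] by (intro continuous_intros) auto
qed

lemma circle_angle_of_lift:
  fixes \<theta> :: "real \<Rightarrow> real"
  assumes "c \<noteq> 0" "continuous_on {a..b} \<theta>" "\<forall>v\<in>{a..b}. \<theta> v \<notin> \<int>" "v \<in> {a..b}"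
  shows "circle_angle c (wcirc c (\<theta> v)) = \<theta> v - of_int \<lfloor>\<theta> b\<rfloor>"
proof -
  define k where "k = \<lfloor>\<theta> b\<rfloor>"
  have "\<theta> b \<notin> \<int>"
    using assms(3,4) by auto
  then have "of_int k \<noteq> \<theta> b"
    using Ints_of_int by metis
  then have kb: "of_int k < \<theta> b" "\<theta> b < of_int k + 1"
    unfolding k_def by linarith+
  have "connected (\<theta> ` {v..b})"
    using assms(4) by (intro connected_continuous_image continuous_on_subset[OF assms(2)]) auto
  moreover have "\<theta> v \<in> \<theta> ` {v..b}" "\<theta> b \<in> \<theta> ` {v..b}"
    using assms(4) by auto
  ultimately have interval: "z \<in> \<theta> ` {v..b}" if "min (\<theta> v) (\<theta> b) \<le> z" "z \<le> max (\<theta> v) (\<theta> b)" for z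
    using that unfolding connected_iff_interval by (metis max_def min_def)
  have "\<theta> w \<notin> \<int>" if "w \<in> {v..b}" for w
    using assms(3,4) that by auto
  then have "of_int k \<notin> \<theta> ` {v..b}" "of_int k + 1 \<notin> \<theta> ` {v..b}"
    by (metis Ints_1 Ints_add Ints_of_int imageE)+
  then have "of_int k < \<theta> v" "\<theta> v < of_int k + 1"
    using interval[of "of_int k"] interval[of "of_int k + 1"] kb by linarith+
  moreover have "wcirc c (\<theta> v) = wcirc c (\<theta> v - of_int k)"
    using wcirc_add_of_int[of c "\<theta> v - of_int k" k] by simp
  ultimately show ?thesis
    using circle_angle_wcirc[OF assms(1)] by (simp add: k_def)
qed

lemma circle_angle_cnj:
  assumes "z \<in> circle_of a" "z \<noteq> 0" shows "circle_angle a (cnj z) = 1 - circle_angle a z"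
proof -
  have "cnj z = wcirc a (1 - circle_angle a z)"
    using circle_angle(3)[OF assms] wcirc_add_of_int[of a "- circle_angle a z" 1] by (metis cnj_wcirc add.commute diff_conv_add_uminus of_int_1)
  then show ?thesis
    using circle_angle(1,2)[OF assms] circle_angle_wcirc[OF circle_of_label_nonzero[OF assms]] by simp
qed

lemma connected_subset_circle_of:
  assumes "finite A" "connected S" "S \<subseteq> wedge A - {0}" "z \<in> S" "z \<in> circle_of c"
  shows "S \<subseteq> circle_of c"
proof -
  define B where "B = \<Union>(circle_of ` (A - {c}))"
  have "closed B"
    unfolding B_def using assms(1) closed_circle_of by (intro closed_Union) auto
  moreover have "S \<subseteq> circle_of c \<union> B" "circle_of c \<inter> B \<inter> S = {}"
    using assms(3) circle_of_inter by (fastforce simp: B_def wedge_def)+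
  ultimately have "B \<inter> S = {}"
    using assms(2,4,5) closed_circle_of[of c] unfolding connected_closed by blast
  with \<open>S \<subseteq> circle_of c \<union> B\<close> show ?thesis
    by blast
qed

section \<open>Locally positive paths\<close>

lemma locally_positive_isCont:
  assumes "locally_positive A g" shows "isCont g t0"
proof -
  obtain e a b \<theta> \<theta>' where e: "e > 0"
    and left: "continuous_on {t0 - e..t0} \<theta>" "\<forall>t\<in>{t0 - e..t0}. g t = wcirc a (\<theta> t)"
    and right: "continuous_on {t0..t0 + e} \<theta>'" "\<forall>t\<in>{t0..t0 + e}. g t = wcirc b (\<theta>' t)"
    using assms unfolding locally_positive_def by metis
  have "continuous_on {t0 - e..t0} g" "continuous_on {t0..t0 + e} g"
    using continuous_on_wcirc[OF left(1), of a] continuous_on_wcirc[OF right(1), of b] left(2) right(2)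
    by (metis (no_types, lifting) continuous_on_cong)+
  then have "continuous_on ({t0 - e..t0} \<union> {t0..t0 + e}) g"
    by (rule continuous_on_closed_Un[rotated 2]) auto
  moreover have "{t0 - e..t0} \<union> {t0..t0 + e} = {t0 - e..t0 + e}"
    using e by auto
  ultimately show ?thesis
    using e by (intro continuous_on_interior[of "{t0 - e..t0 + e}"]) (auto simp: interior_atLeastAtMost_real)
qed

lemma locally_positive_continuous_on: "locally_positive A g \<Longrightarrow> continuous_on S g"
  by (simp add: continuous_at_imp_continuous_on locally_positive_isCont)

lemma locally_positive_moves:
  assumes "locally_positive A g" obtains \<delta> where "\<delta> > 0" "\<And>d. 0 < d \<Longrightarrow> d \<le> \<delta> \<Longrightarrow> g (t + d) \<noteq> g t"
proof -
  obtain e where "e > 0" "inj_on g {t - e<..<t + e}"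
    using assms unfolding locally_positive_def by blast
  then show ?thesis
    by (intro that[of "e/2"]) (auto dest: inj_onD)
qed

text \<open>Reversing time and conjugating keeps a path positive, since \<open>cnj (wcirc a x) = wcirc a (- x)\<close>.\<close>

lemma reflected_lift:
  fixes \<theta> :: "real \<Rightarrow> real"
  assumes "continuous_on {s..t} \<theta>" "strict_mono_on {s..t} \<theta>" "\<forall>u\<in>{s..t}. g u = wcirc a (\<theta> u)"
  shows "continuous_on {-t..-s} (\<lambda>u. - \<theta> (- u))" "strict_mono_on {-t..-s} (\<lambda>u. - \<theta> (- u))"
    "\<forall>u\<in>{-t..-s}. cnj (g (- u)) = wcirc a (- \<theta> (- u))"
proof -
  have "continuous_on {-t..-s} (\<lambda>u::real. - u)"
    by (intro continuous_intros)
  then have "continuous_on {-t..-s} (\<lambda>u. \<theta> (- u))"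
    by (rule continuous_on_compose2[OF assms(1)]) auto
  then show "continuous_on {-t..-s} (\<lambda>u. - \<theta> (- u))"
    by (intro continuous_intros)
  show "strict_mono_on {-t..-s} (\<lambda>u. - \<theta> (- u))"
    using assms(2) by (auto simp: strict_mono_on_def)
  show "\<forall>u\<in>{-t..-s}. cnj (g (- u)) = wcirc a (- \<theta> (- u))"
    using assms(3) by (auto simp: cnj_wcirc)
qed

lemma locally_positive_reverse:
  assumes "locally_positive A g" shows "locally_positive A (\<lambda>t. cnj (g (- t)))"
  unfolding locally_positive_def
proof
  fix t0
  obtain e a \<theta> b \<theta>' where e: "e > 0" "inj_on g {- t0 - e<..<- t0 + e}" "a \<in> A" "b \<in> A"
    and left: "continuous_on {- t0 - e..- t0} \<theta>" "strict_mono_on {- t0 - e..- t0} \<theta>"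
      "\<forall>t\<in>{- t0 - e..- t0}. g t = wcirc a (\<theta> t)"
    and right: "continuous_on {- t0..- t0 + e} \<theta>'" "strict_mono_on {- t0..- t0 + e} \<theta>'"
      "\<forall>t\<in>{- t0..- t0 + e}. g t = wcirc b (\<theta>' t)"
    using assms unfolding locally_positive_def by metis
  have "inj_on (\<lambda>t. cnj (g (- t))) {t0 - e<..<t0 + e}"
  proof (rule inj_onI)
    fix x y assume "x \<in> {t0 - e<..<t0 + e}" "y \<in> {t0 - e<..<t0 + e}" "cnj (g (- x)) = cnj (g (- y))"
    then have "- x = - y"
      by (intro inj_onD[OF e(2)]) auto
    then show "x = y"
      by simp
  qed
  moreover have "{- (- t0 + e)..- (- t0)} = {t0 - e..t0}" "{- (- t0)..- (- t0 - e)} = {t0..t0 + e}"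
    by auto
  ultimately show "\<exists>e>0. inj_on (\<lambda>t. cnj (g (- t))) {t0 - e<..<t0 + e} \<and>
      (\<exists>a\<in>A. \<exists>\<theta>. continuous_on {t0 - e..t0} \<theta> \<and> strict_mono_on {t0 - e..t0} \<theta> \<and>
          (\<forall>t\<in>{t0 - e..t0}. cnj (g (- t)) = wcirc a (\<theta> t))) \<and>
      (\<exists>b\<in>A. \<exists>\<theta>. continuous_on {t0..t0 + e} \<theta> \<and> strict_mono_on {t0..t0 + e} \<theta> \<and>
          (\<forall>t\<in>{t0..t0 + e}. cnj (g (- t)) = wcirc b (\<theta> t)))"
    using e reflected_lift[OF right] reflected_lift[OF left] by metis
qed

lemma less_if_smaller_values_to_the_left:
  fixes \<theta> :: "real \<Rightarrow> real"
  assumes "continuous_on {s..t} \<theta>" "s < t"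
    and left: "\<And>u. u \<in> {s<..t} \<Longrightarrow> \<exists>u'\<in>{s..<u}. \<theta> u' < \<theta> u"
  shows "\<theta> s < \<theta> t"
proof -
  obtain u0 where u0: "u0 \<in> {s..t}" "\<forall>y\<in>{s..t}. \<theta> u0 \<le> \<theta> y"
    using continuous_attains_inf[OF compact_Icc _ assms(1)] assms(2) by auto
  have "u0 = s"
    using left[of u0] u0 by force
  then show ?thesis
    using left[of t] assms(2) u0 by force
qed

lemma continuous_on_circle_angle_path:
  assumes "locally_positive A g" "\<forall>u\<in>S. g u \<in> circle_of c - {0}"
  shows "continuous_on S (\<lambda>u. circle_angle c (g u))"
proof (intro continuous_at_imp_continuous_on ballI)
  fix u assume "u \<in> S"
  then show "isCont (\<lambda>u. circle_angle c (g u)) u"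
    using isCont_o2[OF locally_positive_isCont[OF assms(1)] isCont_circle_angle] assms(2) by blast
qed

lemma locally_positive_angle_less:
  assumes lp: "locally_positive A g" and "s < t" and on: "\<forall>u\<in>{s..t}. g u \<in> circle_of c - {0}"
  shows "circle_angle c (g s) < circle_angle c (g t)"
proof (rule less_if_smaller_values_to_the_left[OF _ \<open>s < t\<close>])
  show "continuous_on {s..t} (\<lambda>u. circle_angle c (g u))"
    using on by (intro continuous_on_circle_angle_path[OF lp])
next
  fix u assume u: "u \<in> {s<..t}"
  obtain e a \<theta> where e: "e > 0" and \<theta>: "strict_mono_on {u - e..u} \<theta>" "continuous_on {u - e..u} \<theta>"
    and g: "\<forall>v\<in>{u - e..u}. g v = wcirc a (\<theta> v)"
    using lp unfolding locally_positive_def by metis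
  have "g u \<in> circle_of a"
    using g e by (auto simp: circle_of_def)
  then have "a = c"
    using on u circle_of_inter by (metis DiffE atLeastAtMost_iff greaterThanAtMost_iff insertI1 less_imp_le)
  have c: "c \<noteq> 0"
    using on u circle_of_label_nonzero[of "g u" c] by auto
  obtain d where d: "0 < d" "d \<le> e" "d < u - s"
    using e u by (intro that[of "min e (u - s) / 2"]) auto
  have g_lift: "g v = wcirc c (\<theta> v)" if "v \<in> {u - d..u}" for v
    using g \<open>a = c\<close> d that by auto
  have "\<forall>v\<in>{u - d..u}. \<theta> v \<notin> \<int>"
  proof
    fix v assume v: "v \<in> {u - d..u}"
    then have "wcirc c (\<theta> v) \<noteq> 0"
      using on[rule_format, of v] g_lift[OF v] u d by simp
    then show "\<theta> v \<notin> \<int>"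
      using wcirc_eq_0_iff[OF c] by blast
  qed
  then have "circle_angle c (g v) = \<theta> v - of_int \<lfloor>\<theta> u\<rfloor>" if "v \<in> {u - d..u}" for v
    using circle_angle_of_lift[OF c continuous_on_subset[OF \<theta>(2)] _ that] g_lift[OF that] d by auto
  moreover have "\<theta> (u - d) < \<theta> u"
    using \<theta>(1) d by (auto intro: strict_mono_onD)
  ultimately show "\<exists>u'\<in>{s..<u}. circle_angle c (g u') < circle_angle c (g u)"
    using d by (intro bexI[of _ "u - d"]) auto
qed

lemma locally_positive_angle_mono:
  assumes "locally_positive A g" "s \<le> t" "\<forall>u\<in>{s..t}. g u \<in> circle_of c - {0}"
  shows "circle_angle c (g s) \<le> circle_angle c (g t)"
  using locally_positive_angle_less[OF assms(1) _ assms(3)] assms(2) by (cases "s = t") auto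

lemma locally_positive_image_in_circle:
  assumes "locally_positive A g" "finite A" "is_interval I" "\<forall>t\<in>I. g t \<in> wedge A - {0}"
    and "t0 \<in> I" "g t0 \<in> circle_of c"
  shows "\<forall>t\<in>I. g t \<in> circle_of c - {0}"
proof -
  have "connected (g ` I)"
    using assms(1,3) by (intro connected_continuous_image locally_positive_continuous_on is_interval_connected)
  then have "g ` I \<subseteq> circle_of c"
    using assms(2,4-6) by (intro connected_subset_circle_of[of A "g ` I" "g t0"]) auto
  then show ?thesis
    using assms(4) by auto
qed

lemma locally_positive_norm_antimono:
  assumes lp: "locally_positive A g" and g0: "g 0 = wcirc c (1/2)"
    and on: "\<forall>u\<in>{0..t}. g u \<in> circle_of c - {0}" and "0 \<le> s" "s \<le> t"
  shows "norm (g t) \<le> norm (g s)"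
proof -
  have c: "c \<noteq> 0"
    using on assms(4,5) circle_of_label_nonzero by fastforce
  have "1/2 \<le> circle_angle c (g s)"
    using locally_positive_angle_mono[OF lp \<open>0 \<le> s\<close>, of c] on assms(5) circle_angle_wcirc[OF c] g0 by simp
  moreover have "circle_angle c (g s) \<le> circle_angle c (g t)"
    using locally_positive_angle_mono[OF lp \<open>s \<le> t\<close>, of c] on assms(4) by simp
  ultimately show ?thesis
    using norm_wcirc_antimono[of "circle_angle c (g s)" "circle_angle c (g t)" c]
      circle_angle[of "g s" c] circle_angle[of "g t" c] on assms(4,5) by auto
qed

text \<open>Were the angle below \<open>1/2\<close> all along, the norm of the path would increase, hence stay
  bounded away from \<open>0\<close> near the end of the excursion.\<close>

lemma locally_positive_excursion_reaches_half:
  assumes lp: "locally_positive A g" and "u < v" "g v = 0"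
    and on: "\<forall>t\<in>{u<..<v}. g t \<in> circle_of c - {0}"
  shows "\<exists>t\<in>{u<..<v}. 1/2 \<le> circle_angle c (g t)"
proof (rule ccontr)
  assume "\<not> ?thesis"
  then have below: "\<forall>t\<in>{u<..<v}. circle_angle c (g t) < 1/2"
    by (simp add: not_le)
  define t1 where "t1 = (u + v) / 2"
  have t1: "t1 \<in> {u<..<v}"
    using \<open>u < v\<close> by (simp add: t1_def)
  have "norm (g t1) \<le> norm (g t)" if "t \<in> {t1<..<v}" for t
  proof -
    have t: "t \<in> {u<..<v}"
      using that t1 by auto
    then have "norm (wcirc c (circle_angle c (g t1))) \<le> norm (wcirc c (circle_angle c (g t)))"
      using below[rule_format, OF t] that t1 circle_angle(1)[of "g t1" c] on
      by (intro norm_wcirc_mono locally_positive_angle_mono[OF lp]) auto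
    then show ?thesis
      using circle_angle(3) on t t1 by auto
  qed
  moreover have "eventually (\<lambda>t. t \<in> {t1<..<v}) (at_left v)"
    using t1 by (intro eventually_at_left_real) auto
  ultimately have "eventually (\<lambda>t. norm (g t1) \<le> norm (g t)) (at_left v)"
    by (auto elim: eventually_mono)
  moreover have "(g \<longlongrightarrow> 0) (at_left v)"
    using locally_positive_isCont[OF lp, of v] \<open>g v = 0\<close> by (simp add: isCont_def filterlim_at_split)
  ultimately have "norm (g t1) \<le> norm (0::complex)"
    using tendsto_lowerbound[OF tendsto_norm] trivial_limit_at_left_real by blast
  then show False
    using on t1 by auto
qed

text \<open>The angle reaches \<open>1/2\<close> from below by the previous lemma applied to the path and,
  since conjugation reflects angles at \<open>1/2\<close>, from above by the lemma applied to the reversed path.\<close>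

lemma locally_positive_passes_midpoint:
  assumes lp: "locally_positive A g" and "u < v" "g u = 0" "g v = 0"
    and on: "\<forall>t\<in>{u<..<v}. g t \<in> circle_of c - {0}"
  shows "\<exists>t\<in>{u<..<v}. g t = wcirc c (1/2)"
proof -
  define \<theta> where "\<theta> t = circle_angle c (g t)" for t
  obtain t where t: "t \<in> {u<..<v}" "1/2 \<le> \<theta> t"
    using locally_positive_excursion_reaches_half[OF assms(1,2,4) on] by (auto simp: \<theta>_def)
  have "\<exists>t\<in>{- v<..<- u}. 1/2 \<le> circle_angle c (cnj (g (- t)))"
    using assms(2,3) on cnj_in_circle_of
    by (intro locally_positive_excursion_reaches_half[OF locally_positive_reverse[OF lp]]) auto
  then obtain s where s: "s \<in> {u<..<v}" "\<theta> s \<le> 1/2"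
    using on circle_angle_cnj by (force simp: \<theta>_def)
  have "connected (\<theta> ` {u<..<v})"
    unfolding \<theta>_def using on by (intro connected_continuous_image continuous_on_circle_angle_path[OF lp]) auto
  then have "1/2 \<in> \<theta> ` {u<..<v}"
    using s t unfolding connected_iff_interval by blast
  then obtain r where r: "r \<in> {u<..<v}" "\<theta> r = 1/2"
    by auto
  moreover have "g r = wcirc c (\<theta> r)"
    using circle_angle(3) on r by (auto simp: \<theta>_def)
  ultimately show ?thesis
    by metis
qed

section \<open>Flows on compact spaces\<close>

locale compact_flow =
  fixes X :: "'a::metric_space set" and \<phi> :: "real \<Rightarrow> 'a \<Rightarrow> 'a"
  assumes compact: "compact X"
    and continuous: "continuous_on (UNIV \<times> X) (\<lambda>(t, x). \<phi> t x)"
    and flow_in: "\<And>t x. x \<in> X \<Longrightarrow> \<phi> t x \<in> X"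
    and flow_0: "\<And>x. x \<in> X \<Longrightarrow> \<phi> 0 x = x"
    and flow_add: "\<And>s t x. x \<in> X \<Longrightarrow> \<phi> (s + t) x = \<phi> s (\<phi> t x)"
begin

lemma flow_tendsto:
  assumes "a \<longlonglongrightarrow> a0" "y \<longlonglongrightarrow> y0" "\<And>j. y j \<in> X" "y0 \<in> X"
  shows "(\<lambda>j. \<phi> (a j) (y j)) \<longlonglongrightarrow> \<phi> a0 y0"
proof -
  have "(\<lambda>j. (\<lambda>(t, x). \<phi> t x) (a j, y j)) \<longlonglongrightarrow> (\<lambda>(t, x). \<phi> t x) (a0, y0)"
    using assms by (intro continuous_on_tendsto_compose[OF continuous] tendsto_Pair) auto
  then show ?thesis
    by simp
qed

lemma continuous_on_orbit:
  assumes "x \<in> X" shows "continuous_on UNIV (\<lambda>t. \<phi> t x)"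
proof -
  have "continuous_on UNIV (\<lambda>t::real. (t, x))"
    by (intro continuous_intros)
  moreover have "range (\<lambda>t. (t, x)) \<subseteq> UNIV \<times> X"
    using assms by auto
  ultimately show ?thesis
    using continuous_on_compose2[OF continuous, of UNIV "\<lambda>t. (t, x)"] by simp
qed

lemma flow_periodic_nat: "x \<in> X \<Longrightarrow> \<phi> q x = x \<Longrightarrow> \<phi> (real n * q) x = x"
proof (induction n)
  case (Suc n)
  then show ?case
    using flow_add[of x q "real n * q"] by (simp add: algebra_simps)
qed (simp add: flow_0)

lemma flow_periodic_int:
  assumes "x \<in> X" "\<phi> q x = x" shows "\<phi> (of_int k * q) x = x"
proof (cases "k \<ge> 0")
  case True
  then show ?thesis
    using flow_periodic_nat[OF assms, of "nat k"] by simp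
next
  case False
  have "\<phi> (- q) x = x"
    using assms flow_add[of x "- q" q] flow_0 by simp
  then show ?thesis
    using flow_periodic_nat[OF assms(1), of "- q" "nat (- k)"] False by simp
qed

lemma flow_diff_periodic:
  assumes "x \<in> X" "\<phi> s x = \<phi> t x" shows "\<phi> (t - s) x = x"
proof -
  have "\<phi> (t - s) x = \<phi> (- s) (\<phi> t x)"
    using flow_add[OF assms(1), of "- s" t] by simp
  also have "\<dots> = x"
    using assms flow_add[of x "- s" s] flow_0 by (simp flip: assms(2))
  finally show ?thesis .
qed

lemma flow_reduce_mod_period:
  assumes x: "x \<in> X" and "q > 0" "\<phi> q x = x"
  obtains r where "r \<in> {0..<q}" "\<phi> t x = \<phi> r x"
proof -
  define k where "k = \<lfloor>t / q\<rfloor>"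
  have "of_int k \<le> t / q" "t / q < of_int k + 1"
    unfolding k_def by linarith+
  then have "t - of_int k * q \<in> {0..<q}"
    using \<open>q > 0\<close> by (auto simp: field_simps)
  moreover have "\<phi> t x = \<phi> (t - of_int k * q) (\<phi> (of_int k * q) x)"
    using flow_add[OF x, of "t - of_int k * q" "of_int k * q"] by simp
  then have "\<phi> t x = \<phi> (t - of_int k * q) x"
    using flow_periodic_int[OF x assms(3)] by simp
  ultimately show ?thesis
    using that by blast
qed

text \<open>Positive periods cannot be arbitrarily small: reducing a time that moves \<open>x\<close> modulo a tiny period
  would move \<open>x\<close> by a tiny time.\<close>

lemma least_period:
  assumes x: "x \<in> X" and "T \<noteq> 0" "\<phi> T x = x" and moves: "\<phi> t x \<noteq> x"
  obtains T0 where "T0 > 0" "\<phi> T0 x = x" "\<And>t. 0 < t \<Longrightarrow> t < T0 \<Longrightarrow> \<phi> t x \<noteq> x"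
proof -
  define S where "S = {q. 0 < q \<and> \<phi> q x = x}"
  have "\<bar>T\<bar> \<in> S"
    using assms flow_diff_periodic[OF x, of T 0] flow_0[OF x] by (auto simp: S_def abs_if)
  then have S: "S \<noteq> {}" "bdd_below S"
    by blast (auto simp: S_def intro!: bdd_belowI[of _ 0])
  define T0 where "T0 = Inf S"
  have "T0 \<in> closure S"
    unfolding T0_def using S by (rule closure_contains_Inf)
  also have "closure S \<subseteq> {q. \<phi> q x = x}"
    by (intro closure_minimal closed_Collect_eq continuous_on_orbit[OF x] continuous_on_const)
      (auto simp: S_def)
  finally have "\<phi> T0 x = x"
    by simp
  obtain e where "e > 0" and e: "\<And>r. \<bar>r\<bar> < e \<Longrightarrow> dist (\<phi> r x) x < dist (\<phi> t x) x"
    using continuous_on_orbit[OF x] moves flow_0[OF x]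
    unfolding continuous_on_iff by (metis UNIV_I dist_real_def diff_zero zero_less_dist_iff)
  have "T0 \<noteq> 0"
  proof
    assume "T0 = 0"
    then obtain q where "q \<in> S" "q < e"
      using cInf_less_iff[OF S] \<open>e > 0\<close> by (auto simp: T0_def)
    then have "q > 0" "\<phi> q x = x"
      by (auto simp: S_def)
    then obtain r where "r \<in> {0..<q}" "\<phi> t x = \<phi> r x"
      by (rule flow_reduce_mod_period[OF x])
    then show False
      using e[of r] \<open>q < e\<close> by auto
  qed
  moreover have "T0 \<ge> 0"
    unfolding T0_def using S by (intro cInf_greatest) (auto simp: S_def)
  moreover have "\<phi> t x \<noteq> x" if "0 < t" "t < T0" for t
    using cInf_lower[OF _ S(2), of t] that unfolding T0_def by (auto simp: S_def)
  ultimately show ?thesis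
    using that[of T0] \<open>\<phi> T0 x = x\<close> by force
qed

lemma loop_free_least_period:
  assumes x: "x \<in> X" and "T0 > 0" and least: "\<And>t. 0 < t \<Longrightarrow> t < T0 \<Longrightarrow> \<phi> t x \<noteq> x"
  shows "loop_free (\<lambda>s. \<phi> (T0 * s) x)"
  unfolding loop_free_def
proof (intro ballI impI)
  have ends: "s = 0 \<and> t = 1" if "s \<in> {0..1}" "t \<in> {0..1}" "\<phi> (T0 * s) x = \<phi> (T0 * t) x" "s < t" for s t
  proof -
    have "\<phi> (T0 * (t - s)) x = x"
      using flow_diff_periodic[OF x that(3)] by (simp add: algebra_simps)
    moreover have "0 < T0 * (t - s)" "T0 * (t - s) \<le> T0"
      using \<open>T0 > 0\<close> that mult_left_mono[of "t - s" 1 T0] by auto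
    ultimately have "T0 * (t - s) = T0"
      using least by force
    then show ?thesis
      using \<open>T0 > 0\<close> that by auto
  qed
  fix s t :: real assume "s \<in> {0..1}" "t \<in> {0..1}" "\<phi> (T0 * s) x = \<phi> (T0 * t) x"
  then show "s = t \<or> s = 0 \<and> t = 1 \<or> s = 1 \<and> t = 0"
    using ends[of s t] ends[of t s] by (cases s t rule: linorder_cases) auto
qed

lemma orbit_eq_image_period:
  assumes x: "x \<in> X" and "T0 > 0" "\<phi> T0 x = x"
  shows "orbit \<phi> x = (\<lambda>s. \<phi> (T0 * s) x) ` {0..1}"
proof
  show "orbit \<phi> x \<subseteq> (\<lambda>s. \<phi> (T0 * s) x) ` {0..1}"
  proof
    fix z assume "z \<in> orbit \<phi> x"
    then obtain t where "z = \<phi> t x"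
      by (auto simp: orbit_def)
    moreover obtain r where "r \<in> {0..<T0}" "\<phi> t x = \<phi> r x"
      by (rule flow_reduce_mod_period[OF assms])
    moreover have "r = T0 * (r / T0)" "r / T0 \<in> {0..1}"
      using \<open>T0 > 0\<close> \<open>r \<in> {0..<T0}\<close> by auto
    ultimately show "z \<in> (\<lambda>s. \<phi> (T0 * s) x) ` {0..1}"
      by (metis image_eqI)
  qed
qed (auto simp: orbit_def)

lemma periodic_orbit_homeomorphic_circle:
  assumes x: "x \<in> X" and "T \<noteq> 0" "\<phi> T x = x" "\<phi> t x \<noteq> x"
  shows "orbit \<phi> x homeomorphic sphere (0::complex) 1"
proof -
  obtain T0 where T0: "T0 > 0" "\<phi> T0 x = x" and least: "\<And>t. 0 < t \<Longrightarrow> t < T0 \<Longrightarrow> \<phi> t x \<noteq> x"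
    using least_period[OF assms] by blast
  define \<gamma> where "\<gamma> s = \<phi> (T0 * s) x" for s
  have "path \<gamma>"
    unfolding path_def \<gamma>_def
    by (rule continuous_on_compose2[OF continuous_on_orbit[OF x]]) (auto intro: continuous_intros)
  moreover have "pathfinish \<gamma> = pathstart \<gamma>"
    using T0 flow_0[OF x] by (simp add: pathfinish_def pathstart_def \<gamma>_def)
  moreover have "loop_free \<gamma>"
    unfolding \<gamma>_def using x T0(1) least by (rule loop_free_least_period)
  moreover have "path_image \<gamma> = orbit \<phi> x"
    unfolding path_image_def \<gamma>_def using orbit_eq_image_period[OF x T0] by simp
  ultimately show ?thesis
    using homeomorphic_simple_path_image_circle[of \<gamma> 1 0] by (simp add: simple_path_def)
qed

lemma compact_flow_reverse: "compact_flow X (\<lambda>t. \<phi> (- t))"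
proof
  have "continuous_on (UNIV \<times> X) (\<lambda>p::real \<times> 'a. (- fst p, snd p))"
    by (intro continuous_on_Pair continuous_on_minus[OF continuous_on_fst] continuous_on_snd continuous_on_id)
  moreover have "(\<lambda>p. (- fst p, snd p)) ` (UNIV \<times> X) \<subseteq> UNIV \<times> X"
    by auto
  ultimately have "continuous_on (UNIV \<times> X) (\<lambda>p. (\<lambda>(t, x). \<phi> t x) (- fst p, snd p))"
    by (rule continuous_on_compose2[OF continuous])
  then show "continuous_on (UNIV \<times> X) (\<lambda>(t, x). \<phi> (- t) x)"
    by (simp add: case_prod_unfold)
qed (auto simp: compact flow_in flow_0 flow_add[symmetric])

end

section \<open>Flows projected onto a wedge\<close>

lemma cnj_wcirc_half: "cnj (wcirc c (1/2)) = wcirc c (1/2)"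
  using wcirc_add_of_int[of c "- 1/2" 1] by (simp add: cnj_wcirc)

lemma tendsto_Sup_at_top_mono_on:
  fixes \<theta> :: "real \<Rightarrow> real"
  assumes mono: "mono_on {a..} \<theta>" and bdd: "bdd_above (\<theta> ` {a..})"
  shows "(\<theta> \<longlongrightarrow> Sup (\<theta> ` {a..})) at_top"
proof (rule order_tendstoI)
  fix y assume "y < Sup (\<theta> ` {a..})"
  then obtain T where "a \<le> T" "y < \<theta> T"
    using less_cSup_iff[OF _ bdd] by auto
  then have "y < \<theta> t" if "T \<le> t" for t
    using mono_onD[OF mono, of T t] that by auto
  then show "eventually (\<lambda>t. y < \<theta> t) at_top"
    unfolding eventually_at_top_linorder by blast
next
  fix y assume "Sup (\<theta> ` {a..}) < y"
  then have "\<theta> t < y" if "a \<le> t" for t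
    using cSup_upper[OF _ bdd, of "\<theta> t"] that by auto
  then show "eventually (\<lambda>t. \<theta> t < y) at_top"
    unfolding eventually_at_top_linorder by blast
qed

locale projected_flow = compact_flow +
  fixes A :: "nat set" and p :: "'a::metric_space \<Rightarrow> complex"
  assumes finite_labels: "finite A"
    and continuous_projection: "continuous_on X p"
    and projection_in_wedge: "\<And>x. x \<in> X \<Longrightarrow> p x \<in> wedge A"
    and positive_orbits: "\<And>x. x \<in> X \<Longrightarrow> locally_positive A (\<lambda>t. p (\<phi> t x))"
begin

lemma projected_flow_reverse: "projected_flow X (\<lambda>t. \<phi> (- t)) A (\<lambda>x. cnj (p x))"
proof -
  interpret reverse: compact_flow X "\<lambda>t. \<phi> (- t)"
    by (rule compact_flow_reverse)
  show ?thesis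
  proof (intro projected_flow.intro projected_flow_axioms.intro)
    show "continuous_on X (\<lambda>x. cnj (p x))"
      using continuous_projection by (rule continuous_on_cnj)
    show "cnj (p x) \<in> wedge A" if "x \<in> X" for x
      using projection_in_wedge[OF that] by (rule cnj_in_wedge)
    show "locally_positive A (\<lambda>t. cnj (p (\<phi> (- t) x)))" if "x \<in> X" for x
      using positive_orbits[OF that] by (rule locally_positive_reverse)
  qed (fact reverse.compact_flow_axioms finite_labels)+
qed

lemma projection_flow_tendsto:
  assumes "y \<longlonglongrightarrow> y0" "\<And>j. y j \<in> X" "y0 \<in> X"
  shows "(\<lambda>j. p (\<phi> s (y j))) \<longlonglongrightarrow> p (\<phi> s y0)"
  using assms flow_in by (intro continuous_on_tendsto_compose[OF continuous_projection] flow_tendsto) auto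

text \<open>A limit of the projection along a forward orbit would be the constant value of the projection
  on the orbit of an \<open>\<omega>\<close>-limit point, which local injectivity forbids.\<close>

lemma orbit_projection_not_convergent:
  assumes x: "x \<in> X" shows "\<not> ((\<lambda>t. p (\<phi> t x)) \<longlongrightarrow> z) at_top"
proof
  assume lim: "((\<lambda>t. p (\<phi> t x)) \<longlongrightarrow> z) at_top"
  obtain \<omega> r where \<omega>: "\<omega> \<in> X" "strict_mono r" "((\<lambda>j. \<phi> (real j) x) \<circ> r) \<longlonglongrightarrow> \<omega>"
    using seq_compactE[OF compact_imp_seq_compact[OF compact], of "\<lambda>j. \<phi> (real j) x"] flow_in[OF x]
    by blast
  have "p (\<phi> s \<omega>) = z" for s
  proof -
    have "(\<lambda>j. p (\<phi> s (\<phi> (real (r j)) x))) \<longlonglongrightarrow> p (\<phi> s \<omega>)"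
      using \<omega> flow_in[OF x] by (intro projection_flow_tendsto) (auto simp: o_def)
    moreover have "(\<lambda>j. p (\<phi> (s + real (r j)) x)) \<longlonglongrightarrow> z"
      by (intro filterlim_compose[OF lim] filterlim_tendsto_add_at_top[OF tendsto_const]
          filterlim_compose[OF filterlim_real_sequentially filterlim_subseq[OF \<omega>(2)]])
    then have "(\<lambda>j. p (\<phi> s (\<phi> (real (r j)) x))) \<longlonglongrightarrow> z"
      by (simp add: flow_add[OF x])
    ultimately show ?thesis
      using LIMSEQ_unique by blast
  qed
  moreover obtain \<delta> where "\<delta> > 0" "p (\<phi> (0 + \<delta>) \<omega>) \<noteq> p (\<phi> 0 \<omega>)"
    using locally_positive_moves[OF positive_orbits[OF \<omega>(1)], of 0] by blast
  ultimately show False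
    by simp
qed

lemma returns_to_wedge_point:
  assumes x: "x \<in> X" and "p x \<noteq> 0" shows "\<exists>t>0. p (\<phi> t x) = 0"
proof (rule ccontr)
  assume no_return: "\<not> ?thesis"
  define g where "g t = p (\<phi> t x)" for t
  have lp: "locally_positive A g"
    unfolding g_def using positive_orbits[OF x] .
  have "\<forall>t\<in>{0..}. g t \<in> wedge A - {0}"
    using no_return assms flow_in projection_in_wedge flow_0 by (auto simp: g_def order_le_less)
  moreover obtain c where "g 0 \<in> circle_of c"
    using projection_in_wedge[OF flow_in[OF x]] by (auto simp: g_def wedge_def)
  ultimately have on: "\<forall>t\<in>{0..}. g t \<in> circle_of c - {0}"
    by (intro locally_positive_image_in_circle[OF lp finite_labels]) (auto simp: is_interval_ci)
  define \<theta> where "\<theta> t = circle_angle c (g t)" for t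
  have "mono_on {0..} \<theta>"
    unfolding \<theta>_def using on by (intro mono_onI locally_positive_angle_mono[OF lp]) auto
  moreover have "bdd_above (\<theta> ` {0..})"
    using circle_angle(2) on by (auto simp: \<theta>_def intro!: bdd_aboveI[of _ 1] less_imp_le)
  ultimately have "((\<lambda>t. wcirc c (\<theta> t)) \<longlongrightarrow> wcirc c (Sup (\<theta> ` {0..}))) at_top"
    by (intro isCont_tendsto_compose[OF isCont_wcirc] tendsto_Sup_at_top_mono_on)
  moreover have "eventually (\<lambda>t. wcirc c (\<theta> t) = g t) at_top"
    unfolding eventually_at_top_linorder using on circle_angle(3) by (auto simp: \<theta>_def)
  ultimately have "(g \<longlongrightarrow> wcirc c (Sup (\<theta> ` {0..}))) at_top"
    by (rule tendsto_cong[THEN iffD1, rotated])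
  then show False
    using orbit_projection_not_convergent[OF x] by (simp add: g_def[abs_def])
qed

lemma first_return:
  assumes x: "x \<in> X" and "p x \<noteq> 0"
  obtains t where "t > 0" "p (\<phi> t x) = 0" "\<And>u. u \<in> {0..<t} \<Longrightarrow> p (\<phi> u x) \<noteq> 0"
proof -
  define Z where "Z = {t. p (\<phi> t x) = 0} \<inter> {0..}"
  have "closed {t. p (\<phi> t x) = 0}"
    using continuous_on_compose2[OF continuous_projection continuous_on_orbit[OF x]] flow_in[OF x]
    by (intro closed_Collect_eq continuous_on_const) auto
  then have "closed Z"
    by (auto simp: Z_def)
  moreover have Z: "Z \<noteq> {}" "bdd_below Z"
    using returns_to_wedge_point[OF assms] by (auto simp: Z_def intro!: bdd_belowI[of _ 0])
  ultimately have "Inf Z \<in> Z"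
    using closure_contains_Inf closure_closed by metis
  then have "0 \<le> Inf Z" and zero: "p (\<phi> (Inf Z) x) = 0"
    by (auto simp: Z_def)
  moreover have "Inf Z \<noteq> 0"
    using zero assms(2) flow_0[OF x] by auto
  ultimately have "0 < Inf Z"
    by simp
  moreover have "p (\<phi> u x) \<noteq> 0" if "u \<in> {0..<Inf Z}" for u
    using cInf_lower[OF _ Z(2), of u] that by (auto simp: Z_def)
  ultimately show ?thesis
    using that zero by blast
qed

lemma zero_free_interval:
  assumes x: "x \<in> X" and "p x \<noteq> 0"
  obtains s t where "s > 0" "t > 0" "p (\<phi> (- s) x) = 0" "p (\<phi> t x) = 0"
    "\<And>u. u \<in> {- s<..<t} \<Longrightarrow> p (\<phi> u x) \<noteq> 0"
proof -
  interpret reverse: projected_flow X "\<lambda>t. \<phi> (- t)" A "\<lambda>x. cnj (p x)"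
    by (rule projected_flow_reverse)
  obtain t where t: "t > 0" "p (\<phi> t x) = 0" "\<And>u. u \<in> {0..<t} \<Longrightarrow> p (\<phi> u x) \<noteq> 0"
    by (rule first_return[OF assms]) blast
  have "cnj (p x) \<noteq> 0"
    using assms(2) by simp
  then obtain s where s: "s > 0" "cnj (p (\<phi> (- s) x)) = 0"
    "\<And>u. u \<in> {0..<s} \<Longrightarrow> cnj (p (\<phi> (- u) x)) \<noteq> 0"
    by (rule reverse.first_return[OF x]) blast
  have "p (\<phi> u x) \<noteq> 0" if "u \<in> {- s<..<t}" for u
  proof (cases "u \<ge> 0")
    case True
    then show ?thesis
      using that t(3)[of u] by auto
  next
    case False
    then show ?thesis
      using that s(3)[of "- u"] by auto
  qed
  then show ?thesis
    using s t by (intro that[of s t]) auto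
qed

lemma passage_through_circle:
  assumes x: "x \<in> X" and "p x \<in> circle_of c" "p x \<noteq> 0"
  obtains s t where "s > 0" "t > 0" "p (\<phi> (- s) x) = 0" "p (\<phi> t x) = 0"
    "\<forall>u\<in>{- s<..<t}. p (\<phi> u x) \<in> circle_of c - {0}"
proof -
  obtain s t where st: "s > 0" "t > 0" "p (\<phi> (- s) x) = 0" "p (\<phi> t x) = 0"
    and nonzero: "\<And>u. u \<in> {- s<..<t} \<Longrightarrow> p (\<phi> u x) \<noteq> 0"
    by (rule zero_free_interval[OF x assms(3)]) blast
  have "\<forall>u\<in>{- s<..<t}. p (\<phi> u x) \<in> circle_of c - {0}"
    using st assms nonzero flow_in projection_in_wedge flow_0
    by (intro locally_positive_image_in_circle[OF positive_orbits finite_labels, of x _ 0])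
      (auto simp: is_interval_def)
  with st show ?thesis
    using that by blast
qed

text \<open>Near a limit \<open>v\<close> of midpoints of circle \<open>c\<close>, an excursion through \<open>c\<close> cannot outlast the
  return time \<open>\<tau>\<close> of \<open>v\<close> by much: in its second half the norm of the projection decreases, yet at
  time \<open>\<tau>\<close> it is close to \<open>0\<close> while shortly after it is close to a nonzero value.\<close>

lemma excursion_time_bound:
  assumes "c \<noteq> 0" and W: "\<And>j. W j \<in> X" "W \<longlonglongrightarrow> v" "v \<in> X"
    and mid: "\<And>j. p (W j) = wcirc c (1/2)"
    and on: "\<And>j u. u \<in> {0..<T j} \<Longrightarrow> p (\<phi> u (W j)) \<in> circle_of c - {0}"
  shows "\<exists>B. eventually (\<lambda>j. T j \<le> B) sequentially"
proof -
  have "(\<lambda>j. p (W j)) \<longlonglongrightarrow> p v"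
    using W by (intro continuous_on_tendsto_compose[OF continuous_projection]) auto
  then have "p v = wcirc c (1/2)"
    unfolding mid by (metis LIMSEQ_unique tendsto_const)
  then obtain \<tau> where "\<tau> > 0" and \<tau>: "p (\<phi> \<tau> v) = 0"
    using returns_to_wedge_point[OF W(3)] wcirc_half_neq_0[OF assms(1)] by auto
  obtain \<delta> where "\<delta> > 0" "p (\<phi> (\<tau> + \<delta>) v) \<noteq> p (\<phi> \<tau> v)"
    using locally_positive_moves[OF positive_orbits[OF W(3)], of \<tau>] by blast
  define \<epsilon> where "\<epsilon> = norm (p (\<phi> (\<tau> + \<delta>) v))"
  have "\<epsilon> > 0"
    using \<tau> \<open>p (\<phi> (\<tau> + \<delta>) v) \<noteq> p (\<phi> \<tau> v)\<close> by (simp add: \<epsilon>_def)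
  have lim: "(\<lambda>j. norm (p (\<phi> \<tau> (W j)))) \<longlonglongrightarrow> 0" "(\<lambda>j. norm (p (\<phi> (\<tau> + \<delta>) (W j)))) \<longlonglongrightarrow> \<epsilon>"
    using projection_flow_tendsto[OF W(2,1,3)] \<tau> unfolding \<epsilon>_def by (metis norm_zero tendsto_norm)+
  have "eventually (\<lambda>j. norm (p (\<phi> \<tau> (W j))) < \<epsilon>/2) sequentially"
    "eventually (\<lambda>j. \<epsilon>/2 < norm (p (\<phi> (\<tau> + \<delta>) (W j)))) sequentially"
    using order_tendstoD(2)[OF lim(1), of "\<epsilon>/2"] order_tendstoD(1)[OF lim(2), of "\<epsilon>/2"] \<open>\<epsilon> > 0\<close>
    by auto
  then have "eventually (\<lambda>j. T j \<le> \<tau> + \<delta>) sequentially"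
  proof eventually_elim
    case (elim j)
    show ?case
    proof (rule ccontr)
      assume "\<not> T j \<le> \<tau> + \<delta>"
      then have "\<forall>u\<in>{0..\<tau> + \<delta>}. p (\<phi> u (W j)) \<in> circle_of c - {0}"
        using on by auto
      then have "norm (p (\<phi> (\<tau> + \<delta>) (W j))) \<le> norm (p (\<phi> \<tau> (W j)))"
        using \<open>\<tau> > 0\<close> \<open>\<delta> > 0\<close> mid flow_0[OF W(1)]
        by (intro locally_positive_norm_antimono[OF positive_orbits[OF W(1)]]) auto
      with elim show False
        by linarith
    qed
  qed
  then show ?thesis
    by blast
qed

lemma excursion_time_bound_backward:
  assumes "c \<noteq> 0" and W: "\<And>j. W j \<in> X" "W \<longlonglongrightarrow> v" "v \<in> X"
    and mid: "\<And>j. p (W j) = wcirc c (1/2)"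
    and on: "\<And>j u. u \<in> {0..<S j} \<Longrightarrow> p (\<phi> (- u) (W j)) \<in> circle_of c - {0}"
  shows "\<exists>B. eventually (\<lambda>j. S j \<le> B) sequentially"
proof -
  interpret reverse: projected_flow X "\<lambda>t. \<phi> (- t)" A "\<lambda>x. cnj (p x)"
    by (rule projected_flow_reverse)
  show ?thesis
  proof (rule reverse.excursion_time_bound[OF assms(1) W])
    show "cnj (p (W j)) = wcirc c (1/2)" for j
      using mid cnj_wcirc_half by simp
    show "cnj (p (\<phi> (- u) (W j))) \<in> circle_of c - {0}" if "u \<in> {0..<S j}" for j u
      using on[OF that] cnj_in_circle_of by auto
  qed
qed

end

section \<open>Expansions\<close>

lemma fcomp_0: "(\<And>i. f i 0 = 0) \<Longrightarrow> fcomp f n k 0 = 0"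
  by (induction k) auto

locale flow_expansion = compact_flow +
  fixes A :: "nat \<Rightarrow> nat set" and p :: "nat \<Rightarrow> 'a::metric_space \<Rightarrow> complex"
    and f :: "nat \<Rightarrow> complex \<Rightarrow> complex" and xb :: 'a
  assumes labels: "\<And>i. wedge_labels (A i)"
    and continuous_projection: "\<And>i. continuous_on X (p i)"
    and projection_onto_wedge: "\<And>i. p i ` X = wedge (A i)"
    and positive_orbits: "\<And>i x. x \<in> X \<Longrightarrow> locally_positive (A i) (\<lambda>t. p i (\<phi> t x))"
    and bonding_map_0: "\<And>i. f i 0 = 0"
    and projection_compatible: "\<And>n m x. n < m \<Longrightarrow> x \<in> X \<Longrightarrow> p n x = fcomp f n (m - n) (p m x)"
    and base_point: "xb \<in> X" "\<And>i. p i xb = 0"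
    and projections_injective: "\<And>x y. x \<in> X \<Longrightarrow> y \<in> X \<Longrightarrow> (\<And>i. p i x = p i y) \<Longrightarrow> x = y"
begin

lemma projected_flow_level: "projected_flow X \<phi> (A i) (p i)"
proof (intro projected_flow.intro projected_flow_axioms.intro)
  show "finite (A i)"
    using labels by (simp add: wedge_labels_def)
  show "p i x \<in> wedge (A i)" if "x \<in> X" for x
    using projection_onto_wedge[of i] that by blast
qed (fact compact_flow_axioms continuous_projection positive_orbits)+

lemma projection_zero_below: "x \<in> X \<Longrightarrow> p m x = 0 \<Longrightarrow> k \<le> m \<Longrightarrow> p k x = 0"
  using projection_compatible[of k m x] fcomp_0[of f, OF bonding_map_0] by (cases "k = m") auto

definition midpoint_excursion :: "nat \<Rightarrow> nat \<Rightarrow> nat \<Rightarrow> 'a \<Rightarrow> real \<Rightarrow> real \<Rightarrow> bool" where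
  "midpoint_excursion n a m V s t \<longleftrightarrow> V \<in> X \<and> 0 < s \<and> 0 < t \<and> p n V = wcirc a (1/2) \<and>
     (\<forall>u\<in>{- s<..<t}. p n (\<phi> u V) \<in> circle_of a - {0}) \<and> p m (\<phi> (- s) V) = 0 \<and> p m (\<phi> t V) = 0"

lemma midpoint_excursion_exists:
  assumes "n < m" "c \<in> A m"
    and word: "\<forall>\<theta>\<in>{0<..<1}. fcomp f n (m - n) (wcirc c \<theta>) \<in> circle_of a - {0}"
  shows "\<exists>V s t. midpoint_excursion n a m V s t"
proof -
  interpret level_m: projected_flow X \<phi> "A m" "p m"
    by (rule projected_flow_level)
  have "c \<noteq> 0"
    using labels[of m] assms(2) by (auto simp: wedge_labels_def)
  have "wcirc c (1/2) \<in> wedge (A m)"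
    using assms(2) by (auto simp: wedge_def circle_of_def)
  then obtain y where y: "y \<in> X" "p m y = wcirc c (1/2)"
    using projection_onto_wedge[of m] by (metis imageE)
  then obtain s t where st: "s > 0" "t > 0" "p m (\<phi> (- s) y) = 0" "p m (\<phi> t y) = 0"
    and on_c: "\<forall>u\<in>{- s<..<t}. p m (\<phi> u y) \<in> circle_of c - {0}"
    using level_m.passage_through_circle wcirc_half_neq_0[OF \<open>c \<noteq> 0\<close>] by (metis circle_of_def rangeI)
  have on: "\<forall>u\<in>{- s<..<t}. p n (\<phi> u y) \<in> circle_of a - {0}"
  proof
    fix u assume "u \<in> {- s<..<t}"
    then have "circle_angle c (p m (\<phi> u y)) \<in> {0<..<1}" "wcirc c (circle_angle c (p m (\<phi> u y))) = p m (\<phi> u y)"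
      using circle_angle on_c by auto
    then show "p n (\<phi> u y) \<in> circle_of a - {0}"
      using word projection_compatible[OF \<open>n < m\<close> flow_in[OF y(1)]] by metis
  qed
  moreover have "p n (\<phi> (- s) y) = 0" "p n (\<phi> t y) = 0"
    using st \<open>n < m\<close> flow_in[OF y(1)] projection_zero_below by auto
  ultimately obtain u where u: "u \<in> {- s<..<t}" "p n (\<phi> u y) = wcirc a (1/2)"
    using locally_positive_passes_midpoint[OF positive_orbits[OF y(1)]] st by (metis neg_less_0_iff_less less_trans)
  have shift: "\<phi> r (\<phi> u y) = \<phi> (r + u) y" for r
    using flow_add[OF y(1)] by simp
  have "midpoint_excursion n a m (\<phi> u y) (s + u) (t - u)"
    unfolding midpoint_excursion_def shift using u on st flow_in[OF y(1)] by (auto simp: shift)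
  then show ?thesis
    by blast
qed

lemma flow_limit_is_base_point:
  assumes "a \<longlonglongrightarrow> \<alpha>" "W \<longlonglongrightarrow> w" "\<And>j. W j \<in> X" "w \<in> X"
    and "\<And>j. j \<le> M j" "\<And>j. p (M j) (\<phi> (a j) (W j)) = 0"
  shows "\<phi> \<alpha> w = xb"
proof (rule projections_injective[OF flow_in[OF assms(4)] base_point(1)])
  fix k
  have "(\<lambda>j. p k (\<phi> (a j) (W j))) \<longlonglongrightarrow> p k (\<phi> \<alpha> w)"
    using flow_in[OF assms(4)] flow_in[OF assms(3)]
    by (intro continuous_on_tendsto_compose[OF continuous_projection flow_tendsto[OF assms(1-4)]]) auto
  moreover have "p k (\<phi> (a j) (W j)) = 0" if "k \<le> j" for j
    using projection_zero_below[OF flow_in[OF assms(3)] assms(6) order_trans[OF that assms(5)]] .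
  then have "eventually (\<lambda>j. p k (\<phi> (a j) (W j)) = 0) sequentially"
    unfolding eventually_sequentially by blast
  then have "(\<lambda>j. p k (\<phi> (a j) (W j))) \<longlonglongrightarrow> 0"
    by (rule tendsto_eventually)
  ultimately show "p k (\<phi> \<alpha> w) = p k xb"
    by (simp add: LIMSEQ_unique base_point(2))
qed

lemma midpoint_excursion_label_nonzero:
  assumes "midpoint_excursion n a m V s t" shows "a \<noteq> 0"
proof -
  have "p n (\<phi> 0 V) \<in> circle_of a" "p n (\<phi> 0 V) \<noteq> 0"
    using assms unfolding midpoint_excursion_def by auto
  then show ?thesis
    by (rule circle_of_label_nonzero)
qed

lemma excursion_times_bounded:
  fixes V :: "nat \<Rightarrow> 'a" and s t :: "nat \<Rightarrow> real"
  assumes exc: "\<And>j. midpoint_excursion n a (m j) (V j) (s j) (t j)" and "V \<longlonglongrightarrow> v" "v \<in> X"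
  shows "Bseq (\<lambda>j. (s j, t j))"
proof -
  interpret level_n: projected_flow X \<phi> "A n" "p n"
    by (rule projected_flow_level)
  have V: "V j \<in> X" "p n (V j) = wcirc a (1/2)" "0 < s j" "0 < t j"
    "\<And>u. u \<in> {- s j<..<t j} \<Longrightarrow> p n (\<phi> u (V j)) \<in> circle_of a - {0}" for j
    using exc unfolding midpoint_excursion_def by auto
  have "a \<noteq> 0"
    using midpoint_excursion_label_nonzero[OF exc] .
  have "\<exists>B. eventually (\<lambda>j. t j \<le> B) sequentially"
  proof (rule level_n.excursion_time_bound[OF \<open>a \<noteq> 0\<close> V(1) assms(2,3) V(2)])
    show "p n (\<phi> u (V j)) \<in> circle_of a - {0}" if "u \<in> {0..<t j}" for j u
      using V(5)[of u j] V(3)[of j] that by simp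
  qed
  then obtain Bt where Bt: "eventually (\<lambda>j. t j \<le> Bt) sequentially"
    by auto
  have "\<exists>B. eventually (\<lambda>j. s j \<le> B) sequentially"
  proof (rule level_n.excursion_time_bound_backward[OF \<open>a \<noteq> 0\<close> V(1) assms(2,3) V(2)])
    show "p n (\<phi> (- u) (V j)) \<in> circle_of a - {0}" if "u \<in> {0..<s j}" for j u
      using V(5)[of "- u" j] V(4)[of j] that by simp
  qed
  then obtain Bs where Bs: "eventually (\<lambda>j. s j \<le> Bs) sequentially"
    by auto
  show ?thesis
  proof (rule Bseq_eventually_mono)
    show "eventually (\<lambda>j. norm (s j, t j) \<le> norm (Bs + Bt)) sequentially"
      using Bs Bt
    proof eventually_elim
      case (elim j)
      have "norm (s j, t j) \<le> s j + t j"
        using norm_Pair_le[of "s j" "t j"] V(3,4)[of j] by simp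
      then show ?case
        using elim by simp
    qed
  qed (rule BseqI'[of _ "norm (Bs + Bt)"], simp)
qed

lemma convergent_excursions:
  fixes V :: "nat \<Rightarrow> 'a" and s t :: "nat \<Rightarrow> real"
  assumes exc: "\<And>j. midpoint_excursion n a (m j) (V j) (s j) (t j)"
  obtains \<rho> v \<sigma> \<tau> where "strict_mono \<rho>" "v \<in> X" "(V \<circ> \<rho>) \<longlonglongrightarrow> v" "(s \<circ> \<rho>) \<longlonglongrightarrow> \<sigma>" "(t \<circ> \<rho>) \<longlonglongrightarrow> \<tau>"
proof -
  obtain v r where v: "v \<in> X" "strict_mono r" "(V \<circ> r) \<longlonglongrightarrow> v"
    using seq_compactE[OF compact_imp_seq_compact[OF compact], of V] exc
    by (metis midpoint_excursion_def)
  have "Bseq (\<lambda>j. (s (r j), t (r j)))"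
    using exc v by (intro excursion_times_bounded[of n a "m \<circ> r" "V \<circ> r"]) auto
  then have "bounded (range (\<lambda>j. (s (r j), t (r j))))"
    by (simp add: Bseq_eq_bounded)
  then obtain l r2 where r2: "strict_mono r2" "((\<lambda>j. (s (r j), t (r j))) \<circ> r2) \<longlonglongrightarrow> l"
    using bounded_imp_convergent_subsequence by blast
  show ?thesis
  proof (rule that[of "r \<circ> r2" v "fst l" "snd l"])
    show "strict_mono (r \<circ> r2)"
      using v(2) r2(1) by (rule strict_mono_o)
    show "(V \<circ> (r \<circ> r2)) \<longlonglongrightarrow> v"
      using LIMSEQ_subseq_LIMSEQ[OF v(3) r2(1)] by (simp add: o_assoc)
    show "(s \<circ> (r \<circ> r2)) \<longlonglongrightarrow> fst l" "(t \<circ> (r \<circ> r2)) \<longlonglongrightarrow> snd l"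
      using tendsto_fst[OF r2(2)] tendsto_snd[OF r2(2)] by (simp_all add: o_def)
  qed (fact v(1))
qed

lemma base_point_periodic:
  fixes V :: "nat \<Rightarrow> 'a" and s t :: "nat \<Rightarrow> real"
  assumes exc: "\<And>j. midpoint_excursion n a (m j) (V j) (s j) (t j)" and "\<And>j. j \<le> m j"
  shows "\<exists>T. T \<noteq> 0 \<and> \<phi> T xb = xb"
proof -
  obtain \<rho> v \<sigma> \<tau> where \<rho>: "strict_mono \<rho>" and v: "v \<in> X" "(V \<circ> \<rho>) \<longlonglongrightarrow> v"
    and \<sigma>: "(s \<circ> \<rho>) \<longlonglongrightarrow> \<sigma>" and \<tau>: "(t \<circ> \<rho>) \<longlonglongrightarrow> \<tau>"
    by (rule convergent_excursions[OF exc])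
  have V: "V j \<in> X" "p n (V j) = wcirc a (1/2)" "0 < s j" "0 < t j"
    "p (m j) (\<phi> (- s j) (V j)) = 0" "p (m j) (\<phi> (t j) (V j)) = 0" for j
    using exc unfolding midpoint_excursion_def by auto
  have m\<rho>: "j \<le> (m \<circ> \<rho>) j" for j
    using seq_suble[OF \<rho>, of j] assms(2)[of "\<rho> j"] by simp
  have "\<phi> \<tau> v = xb"
  proof (rule flow_limit_is_base_point[OF \<tau> v(2) _ v(1) m\<rho>])
    show "(V \<circ> \<rho>) j \<in> X" "p ((m \<circ> \<rho>) j) (\<phi> ((t \<circ> \<rho>) j) ((V \<circ> \<rho>) j)) = 0" for j
      using V(1,6) by simp_all
  qed
  moreover have "\<phi> (- \<sigma>) v = xb"
  proof (rule flow_limit_is_base_point[OF tendsto_minus[OF \<sigma>] v(2) _ v(1) m\<rho>])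
    show "(V \<circ> \<rho>) j \<in> X" "p ((m \<circ> \<rho>) j) (\<phi> (- (s \<circ> \<rho>) j) ((V \<circ> \<rho>) j)) = 0" for j
      using V(1,5) by simp_all
  qed
  ultimately have ends: "\<phi> \<tau> v = xb" "\<phi> (- \<sigma>) v = xb" .
  have "(\<lambda>j. p n (V (\<rho> j))) \<longlonglongrightarrow> p n v"
    using V(1) v by (intro continuous_on_tendsto_compose[OF continuous_projection]) (auto simp: o_def)
  then have "p n v = wcirc a (1/2)"
    unfolding V(2) by (metis LIMSEQ_unique tendsto_const)
  moreover have "wcirc a (1/2) \<noteq> 0"
    using midpoint_excursion_label_nonzero[OF exc] by (rule wcirc_half_neq_0)
  ultimately have "\<tau> \<noteq> 0"
    using ends(1) base_point(2)[of n] flow_0[OF v(1)] by auto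
  moreover have "0 \<le> \<sigma>" "0 \<le> \<tau>"
    using LIMSEQ_le_const[OF \<sigma>, of 0] LIMSEQ_le_const[OF \<tau>, of 0] V(3,4) by (auto simp: less_imp_le)
  moreover have "\<phi> (\<tau> + \<sigma>) xb = \<phi> \<tau> (\<phi> \<sigma> (\<phi> (- \<sigma>) v))"
    using ends(2) flow_add[OF base_point(1)] by simp
  then have "\<phi> (\<tau> + \<sigma>) xb = xb"
    using ends(1) flow_add[OF v(1), of \<sigma> "- \<sigma>"] flow_0[OF v(1)] by simp
  ultimately show ?thesis
    by (intro exI[of _ "\<tau> + \<sigma>"]) auto
qed

end

lemma flow_expansion_if_expansion:
  assumes "flow_space X \<phi>" "expansion X \<phi> xb A f p"
  shows "flow_expansion X \<phi> A p f xb"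
proof -
  have "compact_flow X \<phi>"
    using assms(1) unfolding flow_space_def by unfold_locales auto
  moreover obtain g where g: "homeomorphism X (inv_limit A f) (\<lambda>x i. p i x) g"
    using assms(2) unfolding expansion_def by blast
  have "x = y" if "x \<in> X" "y \<in> X" "\<And>i. p i x = p i y" for x y
  proof -
    have "(\<lambda>i. p i x) = (\<lambda>i. p i y)"
      using that(3) by blast
    then show ?thesis
      using homeomorphism_apply1[OF g that(1)] homeomorphism_apply1[OF g that(2)] by metis
  qed
  moreover have "f i 0 = 0" for i
    using assms(2) by (simp add: expansion_def positive_map_def)
  ultimately show ?thesis
    using assms(2) unfolding expansion_def projection_def
    by (intro flow_expansion.intro flow_expansion_axioms.intro) auto
qed

lemma sym_word_singleton:
  assumes "sym_word g c [a]" shows "\<forall>\<theta>\<in>{0<..<1}. g (wcirc c \<theta>) \<in> circle_of a - {0}"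
  using assms unfolding sym_word_def by auto

lemma degenerate_proper_singleton_word:
  "degenerate_proper A B g \<Longrightarrow> \<exists>a\<in>A. \<exists>b\<in>B. sym_word g b [a]"
  unfolding degenerate_proper_def by blast

lemma degenerate_proper_infinitely_often:
  fixes n :: nat
  assumes "finite (A n)" and "\<forall>m>n. degenerate_proper (A n) (A m) (F m)"
  obtains a where "\<And>j. \<exists>m\<ge>j. n < m \<and> (\<exists>c\<in>A m. sym_word (F m) c [a])"
proof -
  have "\<exists>a. n < m \<longrightarrow> a \<in> A n \<and> (\<exists>c\<in>A m. sym_word (F m) c [a])" for m
    using assms(2) degenerate_proper_singleton_word by blast
  then obtain a where a: "\<And>m. n < m \<Longrightarrow> a m \<in> A n \<and> (\<exists>c\<in>A m. sym_word (F m) c [a m])"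
    by metis
  have "a ` {n<..} \<subseteq> A n"
    using a by auto
  then have "finite (a ` {n<..})"
    using assms(1) finite_subset by blast
  moreover have "infinite {n<..}"
    by (rule infinite_Ioi)
  ultimately obtain a0 where "infinite (a -` {a0} \<inter> {n<..})"
    by (rule inf_img_fin_domE') blast
  then have "\<exists>m\<ge>j. m \<in> a -` {a0} \<inter> {n<..}" for j
    unfolding infinite_nat_iff_unbounded_le by blast
  then have "\<exists>m\<ge>j. n < m \<and> (\<exists>c\<in>A m. sym_word (F m) c [a0])" for j
    using a by fastforce
  then show ?thesis
    by (rule that)
qed

theorem lemma3p3:
  fixes X :: "'a::metric_space set" and \<phi> :: "real \<Rightarrow> 'a \<Rightarrow> 'a" and xb :: 'a
    and A :: "nat \<Rightarrow> nat set" and f :: "nat \<Rightarrow> complex \<Rightarrow> complex"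
    and p :: "nat \<Rightarrow> 'a \<Rightarrow> complex"
  assumes "flow_space X \<phi>"
    and "expansion X \<phi> xb A f p"
    and "\<exists>n. \<forall>m>n. degenerate_proper (A n) (A m) (fcomp f n (m - n))"
  shows "\<exists>x\<in>X. orbit \<phi> x homeomorphic sphere (0::complex) 1"
proof -
  interpret flow_expansion X \<phi> A p f xb
    using assms(1,2) by (rule flow_expansion_if_expansion)
  obtain n where n: "\<forall>m>n. degenerate_proper (A n) (A m) (fcomp f n (m - n))"
    using assms(3) by blast
  have "finite (A n)"
    using labels[of n] by (simp add: wedge_labels_def)
  then obtain a where a: "\<And>j. \<exists>m\<ge>j. n < m \<and> (\<exists>c\<in>A m. sym_word (fcomp f n (m - n)) c [a])"
    by (rule degenerate_proper_infinitely_often[OF _ n]) blast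
  have "\<exists>m V s t. j \<le> m \<and> midpoint_excursion n a m V s t" for j
    using a[of j] midpoint_excursion_exists sym_word_singleton by metis
  then obtain m V s t where "\<And>j. j \<le> m j" "\<And>j. midpoint_excursion n a (m j) (V j) (s j) (t j)"
    by metis
  then obtain T where "T \<noteq> 0" "\<phi> T xb = xb"
    using base_point_periodic by blast
  moreover obtain t where "\<phi> t xb \<noteq> xb"
    using assms(1) base_point(1) by (auto simp: flow_space_def)
  ultimately show ?thesis
    using periodic_orbit_homeomorphic_circle base_point(1) by blast
qed

end
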